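(* In the setting below, assume $\mathbb{P}(X=x)=0$ and $\mathbb{E}[\mathbb{I}_{\bar B_r}(X)|\eta(X)-\eta(x)|]>0$ for all $r>0$. Let $(r_m)_{m\ge m_1}$ be the $\alpha$-sequence at $x$ for some $\alpha\in(0,1)$, and suppose $x$ is a Lebesgue point for $\eta$ with respect to $\mathbb{P}_X$. Then the following are equivalent: (i) $\mathbb{E}[|\eta(X^x_m)-\eta(x)|]\to 0$ as $m\to\infty$; (ii) $\mathbb{E}[\mathbb{I}_{S_{r_m}}(X^x_m)|\eta(X^x_m)-\eta(x)|]\to 0$ as $m\to\infty$.
   Context: Let $(\mathcal{X},d)$ be a metric space with its Borel $\sigma$-algebra, let $(\Omega,\mathcal{F},\mathbb{P})$ be a probability space, and let $X,X_1,X_2,\dots$ be i.i.d. $\mathcal{X}$-valued random variables with common law $\mathbb{P}_X$. For $x\in\mathcal{X}$ and $r>0$ write $B_r=\{x':d(x,x')<r\}$, $\bar B_r=\{x':d(x,x')\le r\}$ and $S_r=\{x':d(x,x')=r\}$. The support of $\mathbb{P}_X$ is the set of $x$ such that $\mathbb{P}_X(\bar B_r(x))>0$ for all $r>0$. Fix $x$ in the support of $\mathbb{P}_X$ and a bounded measurable $\eta:\mathcal{X}\to\mathbb{R}$. For each $m\in\mathbb{N}$, a nearest neighbor of $x$ among $X_1,\dots,X_m$ is a measurable $X^x_m:\Omega\to\mathcal{X}$ with $X^x_m(\omega)\in\arg\min_{x'\in\{X_1(\omega),\dots,X_m(\omega)\}}d(x,x')$ for every $\omega\in\Omega$; fix such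 a sequence $(X^x_m)_{m\in\mathbb{N}}$. The point $x$ is a Lebesgue point if $\mathbb{E}[\mathbb{I}_{\bar B_r}(X)\,|\eta(X)-\eta(x)|]/\mathbb{P}_X(\bar B_r)\to 0$ as $r\to 0^+$. For $\alpha\in(0,1)$ and $r>0$ define $M_\alpha(r)=\big(\mathbb{E}[\mathbb{I}_{\bar B_r}(X)|\eta(X)-\eta(x)|]\big)^{\alpha}\big(\mathbb{P}_X(\bar B_r)\big)^{1-\alpha}$; let $m_1=\lceil 1/M_\alpha(1)\rceil$ and for integers $m\ge m_1$ let $r_m=\sup\{r>0:M_\alpha(r)<1/m\}$. The sequence $(r_m)_{m\ge m_1}$ is the $\alpha$-sequence at $x$. *)

theory Defs
  imports "HOL-Probability.Probability"
begin

definition loc_dev :: "'b measure \<Rightarrow> ('b \<Rightarrow> 'a::metric_space) \<Rightarrow> ('a \<Rightarrow> real) \<Rightarrow> 'a \<Rightarrow> real \<Rightarrow> real" where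
  "loc_dev M X \<eta> x r = (\<integral>\<omega>. indicator (cball x r) (X \<omega>) * \<bar>\<eta> (X \<omega>) - \<eta> x\<bar> \<partial>M)"

definition ball_prob :: "'b measure \<Rightarrow> ('b \<Rightarrow> 'a::metric_space) \<Rightarrow> 'a \<Rightarrow> real \<Rightarrow> real" where
  "ball_prob M X x r = measure M {\<omega> \<in> space M. X \<omega> \<in> cball x r}"

definition Malpha :: "'b measure \<Rightarrow> ('b \<Rightarrow> 'a::metric_space) \<Rightarrow> ('a \<Rightarrow> real) \<Rightarrow> 'a \<Rightarrow> real \<Rightarrow> real \<Rightarrow> real" where
  "Malpha M X \<eta> x \<alpha> r = (loc_dev M X \<eta> x r) powr \<alpha> * (ball_prob M X x r) powr (1 - \<alpha>)"

definition alpha_seq_start :: "'b measure \<Rightarrow> ('b \<Rightarrow> 'a::metric_space) \<Rightarrow> ('a \<Rightarrow> real) \<Rightarrow> 'a \<Rightarrow> real \<Rightarrow> nat" where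
  "alpha_seq_start M X \<eta> x \<alpha> = nat \<lceil>1 / Malpha M X \<eta> x \<alpha> 1\<rceil>"

text \<open>r_m = sup {r > 0. M_alpha(r) < 1/m} (meaningful for m >= m_1).\<close>
definition alpha_seq :: "'b measure \<Rightarrow> ('b \<Rightarrow> 'a::metric_space) \<Rightarrow> ('a \<Rightarrow> real) \<Rightarrow> 'a \<Rightarrow> real \<Rightarrow> nat \<Rightarrow> real" where
  "alpha_seq M X \<eta> x \<alpha> m = Sup {r. r > 0 \<and> Malpha M X \<eta> x \<alpha> r < 1 / real m}"

definition lebesgue_point :: "'b measure \<Rightarrow> ('b \<Rightarrow> 'a::metric_space) \<Rightarrow> ('a \<Rightarrow> real) \<Rightarrow> 'a \<Rightarrow> bool" where
  "lebesgue_point M X \<eta> x \<longleftrightarrow>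
     ((\<lambda>r. loc_dev M X \<eta> x r / ball_prob M X x r) \<longlongrightarrow> 0) (at_right 0)"

end

theory Submission
  imports Defs
begin

text \<open>Split the risk of the nearest neighbour according to whether it lies in the open ball
  of radius r, on the sphere, or outside the closed ball. By a union bound the ball part is at
  most m E(r), where E(r) is the local deviation over the open ball; by independence the outer
  part is at most C (1 - p(r))^m <= C exp(-m p(r)), where p(r) is the mass of the closed ball.
  At the Lebesgue point the local deviation is at most delta p(r) for small r, so the
  defining property M_alpha(r) < 1/m for r < r_m gives m E(r_m) <= delta^(1-alpha), while
  M_alpha(r) >= 1/m for r > r_m gives m p(r_m) >= delta^(-alpha). Hence for r = r_m the ball
  and the outer parts vanish and only the sphere term remains.\<close>

lemma one_minus_power_le_exp:
  fixes p :: real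
  assumes "p \<le> 1"
  shows "(1 - p) ^ n \<le> exp (- (real n * p))"
proof -
  have "(1 - p) ^ n \<le> exp (- p) ^ n"
    using assms exp_ge_add_one_self[of "- p"] by (intro power_mono) auto
  also have "\<dots> = exp (- (real n * p))"
    by (simp add: exp_of_nat_mult[symmetric])
  finally show ?thesis .
qed

lemma one_minus_power_tendsto_zero:
  fixes p :: "nat \<Rightarrow> real"
  assumes "\<And>n. 0 \<le> p n" "\<And>n. p n \<le> 1"
    and "filterlim (\<lambda>n. real n * p n) at_top sequentially"
  shows "(\<lambda>n. (1 - p n) ^ n) \<longlonglongrightarrow> 0"
proof (rule tendsto_sandwich[where f = "\<lambda>_. 0" and h = "\<lambda>n. exp (- (real n * p n))"])
  show "(\<lambda>n. exp (- (real n * p n))) \<longlonglongrightarrow> 0"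
    by (intro filterlim_compose[OF exp_at_bot]
          filterlim_compose[OF filterlim_uminus_at_bot_at_top assms(3)])
qed (use assms one_minus_power_le_exp in auto)

lemma le_weighted_geometric_mean:
  fixes a b \<delta> \<alpha> :: real
  assumes "0 < a" "0 < b" "0 < \<delta>" "\<alpha> \<le> 1" "a \<le> \<delta> * b"
  shows "a \<le> \<delta> powr (1 - \<alpha>) * (a powr \<alpha> * b powr (1 - \<alpha>))"
proof -
  have "a = a powr \<alpha> * a powr (1 - \<alpha>)"
    using assms by (simp add: powr_add[symmetric])
  also have "\<dots> \<le> a powr \<alpha> * (\<delta> * b) powr (1 - \<alpha>)"
    using assms by (intro mult_left_mono powr_mono2) auto
  also have "\<dots> = \<delta> powr (1 - \<alpha>) * (a powr \<alpha> * b powr (1 - \<alpha>))"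
    using assms by (simp add: powr_mult)
  finally show ?thesis .
qed

lemma weighted_geometric_mean_le:
  fixes a b \<delta> \<alpha> :: real
  assumes "0 \<le> a" "0 < b" "0 \<le> \<delta>" "0 \<le> \<alpha>" "a \<le> \<delta> * b"
  shows "a powr \<alpha> * b powr (1 - \<alpha>) \<le> \<delta> powr \<alpha> * b"
proof -
  have "a powr \<alpha> * b powr (1 - \<alpha>) \<le> (\<delta> * b) powr \<alpha> * b powr (1 - \<alpha>)"
    using assms by (intro mult_right_mono powr_mono2) auto
  also have "\<dots> = \<delta> powr \<alpha> * (b powr \<alpha> * b powr (1 - \<alpha>))"
    using assms by (simp add: powr_mult)
  also have "\<dots> = \<delta> powr \<alpha> * b"
    using assms by (simp add: powr_add[symmetric])
  finally show ?thesis .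
qed

definition open_loc_dev :: "'b measure \<Rightarrow> ('b \<Rightarrow> 'a::metric_space) \<Rightarrow> ('a \<Rightarrow> real) \<Rightarrow> 'a \<Rightarrow> real \<Rightarrow> real" where
  "open_loc_dev M X \<eta> x r = (\<integral>\<omega>. indicator (ball x r) (X \<omega>) * \<bar>\<eta> (X \<omega>) - \<eta> x\<bar> \<partial>M)"

context prob_space
begin

lemma integrable_indicator_dev:
  fixes C :: real
  assumes "Y \<in> measurable M borel" "\<eta> \<in> borel_measurable borel" "S \<in> sets borel"
    and "\<And>y. \<bar>\<eta> y - \<eta> x\<bar> \<le> C"
  shows "integrable M (\<lambda>\<omega>. indicator S (Y \<omega>) * \<bar>\<eta> (Y \<omega>) - \<eta> x\<bar>)"
proof (rule integrable_const_bound[where B = C])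
  show "(\<lambda>\<omega>. indicator S (Y \<omega>) * \<bar>\<eta> (Y \<omega>) - \<eta> x\<bar>) \<in> borel_measurable M"
    using assms(1-3) by measurable
  show "AE \<omega> in M. norm (indicator S (Y \<omega>) * \<bar>\<eta> (Y \<omega>) - \<eta> x\<bar>) \<le> C"
    using assms(4) order_trans[OF abs_ge_zero assms(4)] by (auto simp: indicator_def)
qed

lemma cball_event:
  assumes "Y \<in> measurable M borel"
  shows "{\<omega> \<in> space M. Y \<omega> \<in> cball x r} \<in> events"
proof -
  have "{\<omega> \<in> space M. Y \<omega> \<in> cball x r} = Y -` cball x r \<inter> space M"
    by auto
  then show ?thesis
    using measurable_sets[OF assms borel_closed[OF closed_cball]] by simp
qed

lemma ball_prob_mono:
  assumes "Y \<in> measurable M borel" "r \<le> s"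
  shows "ball_prob M Y x r \<le> ball_prob M Y x s"
  unfolding ball_prob_def
  using assms cball_event[OF assms(1), of x s] by (intro finite_measure_mono) auto

lemma ball_prob_tendsto_from_above:
  assumes Y: "Y \<in> measurable M borel" and "c > 0"
  shows "(\<lambda>n. ball_prob M Y x (r + c / Suc n)) \<longlonglongrightarrow> ball_prob M Y x r"
proof -
  define A where "A n = {\<omega> \<in> space M. Y \<omega> \<in> cball x (r + c / Suc n)}" for n
  have "(\<lambda>n. r + c / Suc n) \<longlonglongrightarrow> r + 0"
    by (intro tendsto_add tendsto_const LIMSEQ_Suc[OF lim_const_over_n])
  then have c_lim: "(\<lambda>n. r + c / Suc n) \<longlonglongrightarrow> r"
    by simp
  have "range A \<subseteq> events"
    unfolding A_def using cball_event[OF Y] by auto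
  moreover have "decseq A"
    unfolding decseq_def A_def using \<open>c > 0\<close>
    by (auto intro: order_trans[OF _ add_left_mono[OF divide_left_mono]])
  ultimately have "(\<lambda>n. measure M (A n)) \<longlonglongrightarrow> measure M (\<Inter>n. A n)"
    by (rule finite_Lim_measure_decseq)
  moreover have "(\<Inter>n. A n) = {\<omega> \<in> space M. Y \<omega> \<in> cball x r}"
  proof (intro equalityI subsetI)
    fix \<omega> assume "\<omega> \<in> (\<Inter>n. A n)"
    then have "\<omega> \<in> space M" "\<And>n. dist x (Y \<omega>) \<le> r + c / Suc n"
      unfolding A_def by auto
    then show "\<omega> \<in> {\<omega> \<in> space M. Y \<omega> \<in> cball x r}"
      using LIMSEQ_le_const[OF c_lim, of "dist x (Y \<omega>)"] by auto
  qed (use \<open>c > 0\<close> in \<open>auto simp: A_def intro: add_increasing2\<close>)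
  ultimately show ?thesis
    unfolding A_def ball_prob_def by simp
qed

lemma ball_prob_arbitrarily_small:
  assumes Y: "Y \<in> measurable M borel" and no_atom: "prob {\<omega> \<in> space M. Y \<omega> = x} = 0"
    and "e > 0"
  shows "\<exists>r > 0. ball_prob M Y x r < e"
proof -
  have "ball_prob M Y x 0 = 0"
    using no_atom unfolding ball_prob_def by simp
  then have "(\<lambda>n. ball_prob M Y x (1 / Suc n)) \<longlonglongrightarrow> 0"
    using ball_prob_tendsto_from_above[OF Y, of 1 x 0] by simp
  from order_tendstoD(2)[OF this \<open>e > 0\<close>] obtain n where "ball_prob M Y x (1 / Suc n) < e"
    by (auto dest: eventually_happens)
  then show ?thesis
    by (intro exI[of _ "1 / Suc n"]) auto
qed

text \<open>Continuity from below: the open ball is the increasing union of closed balls.\<close>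

lemma open_loc_dev_le:
  assumes Y: "Y \<in> measurable M borel" and \<eta>: "\<eta> \<in> borel_measurable borel"
    and bound: "\<And>y. \<bar>\<eta> y - \<eta> x\<bar> \<le> C" and "r > 0"
    and below: "\<And>s. 0 < s \<Longrightarrow> s < r \<Longrightarrow> loc_dev M Y \<eta> x s \<le> b"
  shows "open_loc_dev M Y \<eta> x r \<le> b"
proof -
  define s where "s n = r - r / Suc (Suc n)" for n
  have "s \<longlonglongrightarrow> r - 0"
    unfolding s_def by (intro tendsto_diff tendsto_const LIMSEQ_Suc[OF LIMSEQ_Suc[OF lim_const_over_n]])
  then have s_lim: "s \<longlonglongrightarrow> r"
    by simp
  have s_bounds: "0 < s n" "s n < r" for n
    using \<open>r > 0\<close> unfolding s_def by (auto simp: field_simps intro!: add_pos_nonneg)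
  let ?f = "\<lambda>S \<omega>. indicator S (Y \<omega>) * \<bar>\<eta> (Y \<omega>) - \<eta> x\<bar>"
  have "(\<lambda>n. \<integral>\<omega>. ?f (cball x (s n)) \<omega> \<partial>M) \<longlonglongrightarrow> (\<integral>\<omega>. ?f (ball x r) \<omega> \<partial>M)"
  proof (rule integral_dominated_convergence[where w = "\<lambda>_. C"])
    show "AE \<omega> in M. norm (?f (cball x (s n)) \<omega>) \<le> C" for n
      using bound order_trans[OF abs_ge_zero bound] by (auto simp: indicator_def)
    show "AE \<omega> in M. (\<lambda>n. ?f (cball x (s n)) \<omega>) \<longlonglongrightarrow> ?f (ball x r) \<omega>"
    proof (intro AE_I2 tendsto_eventually)
      fix \<omega>
      show "\<forall>\<^sub>F n in sequentially. ?f (cball x (s n)) \<omega> = ?f (ball x r) \<omega>"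
      proof (cases "dist x (Y \<omega>) < r")
        case True
        from order_tendstoD(1)[OF s_lim True] show ?thesis
          by eventually_elim (use True in \<open>auto simp: indicator_def\<close>)
      next
        case False
        then have "\<not> dist x (Y \<omega>) \<le> s n" for n
          using s_bounds(2)[of n] by linarith
        with False show ?thesis
          by (intro always_eventually) (auto simp: indicator_def)
      qed
    qed
  qed (auto intro!: borel_measurable_integrable integrable_indicator_dev[OF Y \<eta> _ bound]
      borel_open[OF open_ball] borel_closed[OF closed_cball])
  moreover have "(\<integral>\<omega>. ?f (cball x (s n)) \<omega> \<partial>M) \<le> b" for n
    using below[OF s_bounds] unfolding loc_dev_def .
  ultimately show ?thesis
    unfolding open_loc_dev_def by (intro LIMSEQ_le_const2) auto
qed

end

locale iid_sequence = prob_space M for M :: "'b measure" +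
  fixes X :: "nat \<Rightarrow> 'b \<Rightarrow> 'a::metric_space"
  assumes X_measurable[measurable]: "\<And>i. X i \<in> measurable M borel"
    and X_indep: "indep_vars (\<lambda>_. borel) X UNIV"
    and X_ident: "\<And>i. distr M borel (X i) = distr M borel (X 0)"
begin

lemma integral_X_eq:
  fixes h :: "'a \<Rightarrow> real"
  assumes "h \<in> borel_measurable borel"
  shows "(\<integral>\<omega>. h (X i \<omega>) \<partial>M) = (\<integral>\<omega>. h (X 0 \<omega>) \<partial>M)"
  using integral_distr[OF X_measurable assms, of i] integral_distr[OF X_measurable assms, of 0]
    X_ident[of i] by simp

lemma prob_X_eq: "A \<in> sets borel \<Longrightarrow> prob (X i -` A \<inter> space M) = prob (X 0 -` A \<inter> space M)"
  using measure_distr[OF X_measurable, of A i] measure_distr[OF X_measurable, of A 0] X_ident[of i]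
  by simp

lemma prob_all_in:
  assumes "finite I" "I \<noteq> {}" "A \<in> sets borel"
  shows "prob (\<Inter>i\<in>I. X i -` A \<inter> space M) = prob (X 0 -` A \<inter> space M) ^ card I"
proof -
  have "indep_sets (\<lambda>i. {X i -` A \<inter> space M | A. A \<in> sets borel}) UNIV"
    using X_indep unfolding indep_vars_def2 by simp
  then have "prob (\<Inter>i\<in>I. X i -` A \<inter> space M) = (\<Prod>i\<in>I. prob (X i -` A \<inter> space M))"
    by (rule indep_setsD) (use assms in auto)
  also have "\<dots> = (\<Prod>i\<in>I. prob (X 0 -` A \<inter> space M))"
    by (intro prod.cong refl prob_X_eq assms(3))
  finally show ?thesis by simp
qed

lemma prob_all_outside_cball:
  assumes "m \<ge> 1"
  shows "prob (\<Inter>i\<in>{1..m}. X i -` (- cball x r) \<inter> space M) = (1 - ball_prob M (X 0) x r) ^ m"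
proof -
  have outside: "- cball x r \<in> sets borel"
    by (rule borel_open[OF open_Compl[OF closed_cball]])
  have "X 0 -` (- cball x r) \<inter> space M = space M - {\<omega> \<in> space M. X 0 \<omega> \<in> cball x r}"
    by auto
  then have "prob (X 0 -` (- cball x r) \<inter> space M) = 1 - ball_prob M (X 0) x r"
    using prob_compl[OF cball_event[OF X_measurable]] unfolding ball_prob_def by simp
  then show ?thesis
    using prob_all_in[OF _ _ outside, of "{1..m}"] assms by simp
qed

end

locale nearest_neighbor = iid_sequence M X
  for M :: "'b measure" and X :: "nat \<Rightarrow> 'b \<Rightarrow> 'a::metric_space" +
  fixes \<eta> :: "'a \<Rightarrow> real" and x :: 'a and NN :: "nat \<Rightarrow> 'b \<Rightarrow> 'a" and C :: real
  assumes \<eta>_measurable[measurable]: "\<eta> \<in> borel_measurable borel"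
    and dev_bounded: "\<And>y. \<bar>\<eta> y - \<eta> x\<bar> \<le> C"
    and NN_measurable: "\<And>m. m \<ge> 1 \<Longrightarrow> NN m \<in> measurable M borel"
    and NN_in: "\<And>m \<omega>. m \<ge> 1 \<Longrightarrow> \<omega> \<in> space M \<Longrightarrow> NN m \<omega> \<in> (\<lambda>i. X i \<omega>) ` {1..m}"
    and NN_min: "\<And>m \<omega> i. m \<ge> 1 \<Longrightarrow> \<omega> \<in> space M \<Longrightarrow> i \<in> {1..m} \<Longrightarrow>
                   dist x (NN m \<omega>) \<le> dist x (X i \<omega>)"
begin

abbreviation p :: "real \<Rightarrow> real" where
  "p r \<equiv> ball_prob M (X 0) x r"

abbreviation L :: "real \<Rightarrow> real" where
  "L r \<equiv> loc_dev M (X 0) \<eta> x r"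

lemma C_nonneg: "0 \<le> C"
  using dev_bounded[of x] by simp

lemma ball_prob_nonneg: "0 \<le> p r"
  unfolding ball_prob_def by simp

lemma ball_prob_le_1: "p r \<le> 1"
  unfolding ball_prob_def by simp

lemma integrable_indicator_X_dev:
  "S \<in> sets borel \<Longrightarrow> integrable M (\<lambda>\<omega>. indicator S (X i \<omega>) * \<bar>\<eta> (X i \<omega>) - \<eta> x\<bar>)"
  by (rule integrable_indicator_dev[OF X_measurable \<eta>_measurable _ dev_bounded])

lemma integrable_indicator_NN_dev:
  "m \<ge> 1 \<Longrightarrow> S \<in> sets borel \<Longrightarrow> integrable M (\<lambda>\<omega>. indicator S (NN m \<omega>) * \<bar>\<eta> (NN m \<omega>) - \<eta> x\<bar>)"
  by (rule integrable_indicator_dev[OF NN_measurable \<eta>_measurable _ dev_bounded])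

lemma integrable_NN_dev: "m \<ge> 1 \<Longrightarrow> integrable M (\<lambda>\<omega>. \<bar>\<eta> (NN m \<omega>) - \<eta> x\<bar>)"
  using integrable_indicator_NN_dev[of m UNIV] by simp

lemma loc_dev_nonneg: "0 \<le> L r"
  unfolding loc_dev_def by (intro integral_nonneg_AE) auto

lemma loc_dev_mono: "r \<le> s \<Longrightarrow> L r \<le> L s"
  unfolding loc_dev_def
  by (intro integral_mono integrable_indicator_X_dev borel_closed[OF closed_cball])
     (auto simp: indicator_def)

lemma loc_dev_le_ball_prob: "L r \<le> C * p r"
proof -
  have "L r \<le> (\<integral>\<omega>. C * indicator {\<omega> \<in> space M. X 0 \<omega> \<in> cball x r} \<omega> \<partial>M)"
    unfolding loc_dev_def using cball_event[OF X_measurable] C_nonneg dev_bounded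
    by (intro integral_mono integrable_indicator_X_dev borel_closed[OF closed_cball]
          integrable_mult_right integrable_real_indicator)
       (auto simp: indicator_def less_top[symmetric])
  then show ?thesis
    using cball_event[OF X_measurable] unfolding ball_prob_def by simp
qed

lemma open_loc_dev_nonneg: "0 \<le> open_loc_dev M (X 0) \<eta> x r"
  unfolding open_loc_dev_def by (intro integral_nonneg_AE) auto

lemma integral_ball_NN_le:
  assumes m: "m \<ge> 1"
  shows "(\<integral>\<omega>. indicator (ball x r) (NN m \<omega>) * \<bar>\<eta> (NN m \<omega>) - \<eta> x\<bar> \<partial>M)
           \<le> real m * open_loc_dev M (X 0) \<eta> x r"
proof -
  let ?f = "\<lambda>y. indicator (ball x r) y * \<bar>\<eta> y - \<eta> x\<bar>"
  have ball: "ball x r \<in> sets borel"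
    by (rule borel_open[OF open_ball])
  have "(\<integral>\<omega>. ?f (NN m \<omega>) \<partial>M) \<le> (\<integral>\<omega>. (\<Sum>i\<in>{1..m}. ?f (X i \<omega>)) \<partial>M)"
  proof (rule integral_mono)
    show "integrable M (\<lambda>\<omega>. ?f (NN m \<omega>))"
      by (rule integrable_indicator_NN_dev[OF m ball])
    show "integrable M (\<lambda>\<omega>. \<Sum>i\<in>{1..m}. ?f (X i \<omega>))"
      by (intro Bochner_Integration.integrable_sum integrable_indicator_X_dev[OF ball])
    fix \<omega> assume "\<omega> \<in> space M"
    then obtain j where j: "j \<in> {1..m}" and NN_eq: "NN m \<omega> = X j \<omega>"
      using NN_in[OF m] by blast
    show "?f (NN m \<omega>) \<le> (\<Sum>i\<in>{1..m}. ?f (X i \<omega>))"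
      unfolding NN_eq by (rule member_le_sum[OF j]) auto
  qed
  also have "\<dots> = (\<Sum>i\<in>{1..m}. \<integral>\<omega>. ?f (X i \<omega>) \<partial>M)"
    by (intro Bochner_Integration.integral_sum integrable_indicator_X_dev[OF ball])
  also have "\<dots> = (\<Sum>i\<in>{1..m}. \<integral>\<omega>. ?f (X 0 \<omega>) \<partial>M)"
  proof (intro sum.cong refl integral_X_eq)
    show "?f \<in> borel_measurable borel"
      by (intro borel_measurable_times borel_measurable_indicator ball) measurable
  qed
  finally show ?thesis
    unfolding open_loc_dev_def by simp
qed

lemma integral_outside_cball_NN_le:
  assumes m: "m \<ge> 1"
  shows "(\<integral>\<omega>. indicator (- cball x r) (NN m \<omega>) * \<bar>\<eta> (NN m \<omega>) - \<eta> x\<bar> \<partial>M) \<le> C * (1 - p r) ^ m"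
proof -
  define E where "E = (\<Inter>i\<in>{1..m}. X i -` (- cball x r) \<inter> space M)"
  have outside: "- cball x r \<in> sets borel"
    by (rule borel_open[OF open_Compl[OF closed_cball]])
  have E: "E \<in> events"
    unfolding E_def using m by (intro sets.finite_INT measurable_sets[OF X_measurable outside]) auto
  have prob_E: "prob E = (1 - p r) ^ m"
    unfolding E_def by (rule prob_all_outside_cball[OF m])
  have "(\<integral>\<omega>. indicator (- cball x r) (NN m \<omega>) * \<bar>\<eta> (NN m \<omega>) - \<eta> x\<bar> \<partial>M)
          \<le> (\<integral>\<omega>. C * indicator E \<omega> \<partial>M)"
  proof (rule integral_mono)
    show "integrable M (\<lambda>\<omega>. indicator (- cball x r) (NN m \<omega>) * \<bar>\<eta> (NN m \<omega>) - \<eta> x\<bar>)"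
      by (rule integrable_indicator_NN_dev[OF m outside])
    show "integrable M (\<lambda>\<omega>. C * indicator E \<omega>)"
      using E by (intro integrable_mult_right integrable_real_indicator) (auto simp: less_top[symmetric])
    fix \<omega> assume \<omega>: "\<omega> \<in> space M"
    show "indicator (- cball x r) (NN m \<omega>) * \<bar>\<eta> (NN m \<omega>) - \<eta> x\<bar> \<le> C * indicator E \<omega>"
    proof (cases "NN m \<omega> \<in> cball x r")
      case True
      then show ?thesis
        using C_nonneg by (simp add: indicator_def)
    next
      case False
      then have "\<omega> \<in> E"
        unfolding E_def using NN_min[OF m \<omega>] \<omega> by fastforce
      with False show ?thesis
        using dev_bounded by (simp add: indicator_def)
    qed
  qed
  also have "\<dots> = C * (1 - p r) ^ m"
    using E prob_E by simp
  finally show ?thesis .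
qed

lemma risk_NN_le:
  assumes m: "m \<ge> 1"
  shows "(\<integral>\<omega>. \<bar>\<eta> (NN m \<omega>) - \<eta> x\<bar> \<partial>M) \<le> real m * open_loc_dev M (X 0) \<eta> x r
     + (\<integral>\<omega>. indicator (sphere x r) (NN m \<omega>) * \<bar>\<eta> (NN m \<omega>) - \<eta> x\<bar> \<partial>M) + C * (1 - p r) ^ m"
proof -
  let ?f = "\<lambda>S \<omega>. indicator S (NN m \<omega>) * \<bar>\<eta> (NN m \<omega>) - \<eta> x\<bar>"
  have sets: "ball x r \<in> sets borel" "sphere x r \<in> sets borel" "- cball x r \<in> sets borel"
    unfolding cball_diff_eq_sphere[symmetric] by (auto intro: borel_open borel_closed)
  have split: "\<bar>\<eta> (NN m \<omega>) - \<eta> x\<bar> = ?f (ball x r) \<omega> + ?f (sphere x r) \<omega> + ?f (- cball x r) \<omega>"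
    for \<omega>
    by (cases "dist x (NN m \<omega>) < r"; cases "dist x (NN m \<omega>) = r") (auto simp: indicator_def)
  have "(\<integral>\<omega>. \<bar>\<eta> (NN m \<omega>) - \<eta> x\<bar> \<partial>M)
      = (\<integral>\<omega>. ?f (ball x r) \<omega> + ?f (sphere x r) \<omega> + ?f (- cball x r) \<omega> \<partial>M)"
    by (rule Bochner_Integration.integral_cong[OF refl split])
  also have "\<dots> = (\<integral>\<omega>. ?f (ball x r) \<omega> \<partial>M) + (\<integral>\<omega>. ?f (sphere x r) \<omega> \<partial>M)
      + (\<integral>\<omega>. ?f (- cball x r) \<omega> \<partial>M)"
    using integrable_indicator_NN_dev[OF m sets(1)] integrable_indicator_NN_dev[OF m sets(2)]
      integrable_indicator_NN_dev[OF m sets(3)] by (simp add: Bochner_Integration.integral_add)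
  finally show ?thesis
    using integral_ball_NN_le[OF m, of r] integral_outside_cball_NN_le[OF m, of r] by linarith
qed

end

locale nearest_neighbor_lebesgue_point = nearest_neighbor M X \<eta> x NN C
  for M :: "'b measure" and X :: "nat \<Rightarrow> 'b \<Rightarrow> 'a::metric_space"
    and \<eta> :: "'a \<Rightarrow> real" and x :: 'a and NN :: "nat \<Rightarrow> 'b \<Rightarrow> 'a" and C :: real +
  fixes \<alpha> :: real
  assumes alpha: "0 < \<alpha>" "\<alpha> < 1"
    and support: "\<And>r. r > 0 \<Longrightarrow> ball_prob M (X 0) x r > 0"
    and no_atom: "prob {\<omega> \<in> space M. X 0 \<omega> = x} = 0"
    and dev_pos: "\<And>r. r > 0 \<Longrightarrow> loc_dev M (X 0) \<eta> x r > 0"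
    and lebesgue: "lebesgue_point M (X 0) \<eta> x"
begin

abbreviation Ma :: "real \<Rightarrow> real" where
  "Ma r \<equiv> Malpha M (X 0) \<eta> x \<alpha> r"

abbreviation r_seq :: "nat \<Rightarrow> real" where
  "r_seq m \<equiv> alpha_seq M (X 0) \<eta> x \<alpha> m"

lemma Malpha_pos:
  assumes "r > 0"
  shows "Ma r > 0"
  unfolding Malpha_def using dev_pos[OF assms] support[OF assms] by simp

lemma Malpha_mono: "0 < r \<Longrightarrow> r \<le> s \<Longrightarrow> Ma r \<le> Ma s"
  unfolding Malpha_def using alpha dev_pos support loc_dev_mono ball_prob_mono[OF X_measurable]
  by (intro mult_mono powr_mono2) (auto simp: loc_dev_nonneg ball_prob_nonneg)

lemma Malpha_le_ball_prob: "r > 0 \<Longrightarrow> Ma r \<le> C powr \<alpha> * p r"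
  unfolding Malpha_def using alpha C_nonneg
  by (intro weighted_geometric_mean_le loc_dev_nonneg support loc_dev_le_ball_prob) auto

lemma lebesgue_point_loc_dev_le:
  assumes "\<delta> > 0"
  shows "\<exists>r0 > 0. \<forall>s. 0 < s \<longrightarrow> s \<le> r0 \<longrightarrow> L s \<le> \<delta> * p s"
proof -
  have "((\<lambda>r. L r / p r) \<longlongrightarrow> 0) (at_right 0)"
    using lebesgue unfolding lebesgue_point_def .
  from order_tendstoD(2)[OF this assms] obtain b where
    "b > 0" and b: "\<And>s. 0 < s \<Longrightarrow> s < b \<Longrightarrow> L s / p s < \<delta>"
    unfolding eventually_at_right_field by auto
  show ?thesis
  proof (intro exI[of _ "b / 2"] conjI allI impI)
    fix s assume "0 < s" "s \<le> b / 2"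
    then show "L s \<le> \<delta> * p s"
      using b[of s] support[of s] \<open>b > 0\<close> by (simp add: divide_less_eq)
  qed (use \<open>b > 0\<close> in auto)
qed

lemma exists_Malpha_less:
  assumes "m \<ge> 1"
  shows "\<exists>r > 0. Ma r < 1 / real m"
proof -
  have K: "C powr \<alpha> + 1 > 0"
    by (simp add: add_nonneg_pos)
  then obtain r where r: "r > 0" "p r < 1 / (real m * (C powr \<alpha> + 1))"
    using ball_prob_arbitrarily_small[OF X_measurable no_atom, of "1 / (real m * (C powr \<alpha> + 1))"]
      assms by auto
  have "Ma r \<le> (C powr \<alpha> + 1) * p r"
    using Malpha_le_ball_prob[OF r(1)] ball_prob_nonneg[of r] by (simp add: algebra_simps)
  also have "\<dots> < (C powr \<alpha> + 1) * (1 / (real m * (C powr \<alpha> + 1)))"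
    using r(2) K by (intro mult_strict_left_mono)
  also have "\<dots> = 1 / real m"
    using K by simp
  finally show ?thesis
    using r(1) by blast
qed

text \<open>The radius r_m is only meaningful once 1/m <= M_alpha(r0) for some r0 > 0; below that
  threshold the supremum in its definition may range over an unbounded set.\<close>

lemma alpha_seq_characterization:
  assumes r0: "r0 > 0" and m: "m \<ge> 1" and below: "1 / real m \<le> Ma r0"
  shows "0 < r_seq m" "r_seq m \<le> r0"
    "\<And>s. 0 < s \<Longrightarrow> s < r_seq m \<Longrightarrow> Ma s < 1 / real m"
    "\<And>s. r_seq m < s \<Longrightarrow> 1 / real m \<le> Ma s"
proof -
  define S where "S = {r. r > 0 \<and> Ma r < 1 / real m}"
  have r_seq_eq: "r_seq m = Sup S"
    unfolding alpha_seq_def S_def ..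
  obtain r where "r \<in> S"
    unfolding S_def using exists_Malpha_less[OF m] by auto
  then have "r > 0"
    unfolding S_def by simp
  have S_below: "t < r0" if "t \<in> S" for t
  proof (rule ccontr)
    assume "\<not> t < r0"
    then have "Ma r0 \<le> Ma t"
      using r0 by (intro Malpha_mono) auto
    then show False
      using that below unfolding S_def by auto
  qed
  have bdd: "bdd_above S"
    using S_below by (auto intro!: bdd_aboveI[of _ r0] less_imp_le)
  have "r \<le> r_seq m"
    unfolding r_seq_eq by (rule cSup_upper[OF \<open>r \<in> S\<close> bdd])
  then show "0 < r_seq m"
    using \<open>r > 0\<close> by simp
  show "r_seq m \<le> r0"
    unfolding r_seq_eq using \<open>r \<in> S\<close> S_below by (intro cSup_least) (auto intro: less_imp_le)
  show "Ma s < 1 / real m" if s: "0 < s" "s < r_seq m" for s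
  proof -
    obtain t where "t \<in> S" "s < t"
      using s(2) less_cSup_iff[OF _ bdd, of s] \<open>r \<in> S\<close> unfolding r_seq_eq by auto
    then show ?thesis
      using s(1) Malpha_mono[of s t] unfolding S_def by auto
  qed
  show "1 / real m \<le> Ma s" if "r_seq m < s" for s
  proof (rule ccontr)
    assume "\<not> 1 / real m \<le> Ma s"
    then have "s \<in> S"
      unfolding S_def using that \<open>0 < r\<close> \<open>r \<le> r_seq m\<close> by auto
    then show False
      using cSup_upper[OF _ bdd, of s] that unfolding r_seq_eq by simp
  qed
qed

lemma eventually_Malpha_ge:
  assumes "r > 0"
  shows "\<forall>\<^sub>F m in sequentially. m \<ge> 1 \<and> 1 / real m \<le> Ma r"
proof (rule eventually_sequentiallyI[of "nat \<lceil>1 / Ma r\<rceil> + 1"])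
  fix m assume m: "nat \<lceil>1 / Ma r\<rceil> + 1 \<le> m"
  then have "1 / Ma r \<le> real m"
    by linarith
  then show "m \<ge> 1 \<and> 1 / real m \<le> Ma r"
    using Malpha_pos[OF assms] m by (simp add: field_simps)
qed

lemma open_loc_dev_alpha_seq_le:
  assumes "\<delta> > 0" and r0: "r0 > 0" and small: "\<And>s. 0 < s \<Longrightarrow> s \<le> r0 \<Longrightarrow> L s \<le> \<delta> * p s"
    and m: "m \<ge> 1" "1 / real m \<le> Ma r0"
  shows "real m * open_loc_dev M (X 0) \<eta> x (r_seq m) \<le> \<delta> powr (1 - \<alpha>)"
proof -
  note r_m = alpha_seq_characterization[OF r0 m]
  have "open_loc_dev M (X 0) \<eta> x (r_seq m) \<le> \<delta> powr (1 - \<alpha>) * (1 / real m)"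
  proof (rule open_loc_dev_le[OF X_measurable \<eta>_measurable dev_bounded r_m(1)])
    fix s assume s: "0 < s" "s < r_seq m"
    then have "L s \<le> \<delta> * p s"
      using small r_m(2) by auto
    then have "L s \<le> \<delta> powr (1 - \<alpha>) * Ma s"
      unfolding Malpha_def using dev_pos support s alpha \<open>\<delta> > 0\<close>
      by (intro le_weighted_geometric_mean) auto
    also have "\<dots> \<le> \<delta> powr (1 - \<alpha>) * (1 / real m)"
      using r_m(3)[OF s] by (intro mult_left_mono) auto
    finally show "L s \<le> \<delta> powr (1 - \<alpha>) * (1 / real m)" .
  qed
  then show ?thesis
    using m(1) by (simp add: field_simps)
qed

lemma ball_prob_alpha_seq_ge:
  assumes "\<delta> > 0" and r0: "r0 > 0" and small: "\<And>s. 0 < s \<Longrightarrow> s \<le> 2 * r0 \<Longrightarrow> L s \<le> \<delta> * p s"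
    and m: "m \<ge> 1" "1 / real m \<le> Ma r0"
  shows "1 / real m \<le> \<delta> powr \<alpha> * p (r_seq m)"
proof -
  note r_m = alpha_seq_characterization[OF r0 m]
  have above: "1 / real m \<le> \<delta> powr \<alpha> * p s" if s: "r_seq m < s" "s \<le> 2 * r0" for s
  proof -
    have "0 < s"
      using r_m(1) s by simp
    have "1 / real m \<le> Ma s"
      by (rule r_m(4)[OF s(1)])
    also have "\<dots> \<le> \<delta> powr \<alpha> * p s"
      unfolding Malpha_def using small[OF \<open>0 < s\<close> s(2)] \<open>0 < s\<close> support \<open>\<delta> > 0\<close> alpha
      by (intro weighted_geometric_mean_le loc_dev_nonneg) auto
    finally show ?thesis .
  qed
  have "(\<lambda>n. \<delta> powr \<alpha> * p (r_seq m + r0 / Suc n)) \<longlonglongrightarrow> \<delta> powr \<alpha> * p (r_seq m)"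
    by (intro tendsto_mult tendsto_const ball_prob_tendsto_from_above[OF X_measurable r0])
  then show ?thesis
  proof (rule LIMSEQ_le_const)
    have "r_seq m < r_seq m + r0 / Suc n \<and> r_seq m + r0 / Suc n \<le> 2 * r0" for n
    proof -
      have "0 < r0 / Suc n" "r0 / Suc n \<le> r0"
        using r0 by (simp_all add: divide_le_eq)
      then show ?thesis
        using r_m(2) by linarith
    qed
    then show "\<exists>N. \<forall>n\<ge>N. 1 / real m \<le> \<delta> powr \<alpha> * p (r_seq m + r0 / Suc n)"
      by (intro exI[of _ 0] allI impI above) auto
  qed
qed

lemma mult_open_loc_dev_alpha_seq_tendsto_zero:
  "(\<lambda>m. real m * open_loc_dev M (X 0) \<eta> x (r_seq m)) \<longlonglongrightarrow> 0"
proof (rule LIMSEQ_I)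
  fix e :: real assume e: "0 < e"
  define \<delta> where "\<delta> = (e / 2) powr (1 / (1 - \<alpha>))"
  have \<delta>: "\<delta> > 0" "\<delta> powr (1 - \<alpha>) = e / 2"
    unfolding \<delta>_def using e alpha by (simp_all add: powr_powr)
  obtain r0 where r0: "r0 > 0" "\<And>s. 0 < s \<Longrightarrow> s \<le> r0 \<Longrightarrow> L s \<le> \<delta> * p s"
    using lebesgue_point_loc_dev_le[OF \<delta>(1)] by auto
  have "\<forall>\<^sub>F m in sequentially. norm (real m * open_loc_dev M (X 0) \<eta> x (r_seq m) - 0) < e"
    using eventually_Malpha_ge[OF r0(1)]
  proof eventually_elim
    case (elim m)
    then show ?case
      using open_loc_dev_alpha_seq_le[OF \<delta>(1) r0] open_loc_dev_nonneg[of "r_seq m"] \<delta>(2) e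
      by fastforce
  qed
  then show "\<exists>N. \<forall>m\<ge>N. norm (real m * open_loc_dev M (X 0) \<eta> x (r_seq m) - 0) < e"
    unfolding eventually_sequentially .
qed

lemma filterlim_mult_ball_prob_alpha_seq:
  "filterlim (\<lambda>m. real m * p (r_seq m)) at_top sequentially"
  unfolding filterlim_at_top
proof
  fix K :: real
  define K' where "K' = max K 1"
  have K': "K' > 0" "K \<le> K'"
    unfolding K'_def by auto
  define \<delta> where "\<delta> = (1 / K') powr (1 / \<alpha>)"
  have \<delta>: "\<delta> > 0" "\<delta> powr \<alpha> = 1 / K'"
    unfolding \<delta>_def using K' alpha by (simp_all add: powr_powr)
  obtain r0 where r0: "r0 > 0" "\<And>s. 0 < s \<Longrightarrow> s \<le> 2 * (r0 / 2) \<Longrightarrow> L s \<le> \<delta> * p s"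
    using lebesgue_point_loc_dev_le[OF \<delta>(1)] by auto
  then have "r0 / 2 > 0"
    by simp
  show "\<forall>\<^sub>F m in sequentially. K \<le> real m * p (r_seq m)"
    using eventually_Malpha_ge[OF \<open>r0 / 2 > 0\<close>]
  proof eventually_elim
    case (elim m)
    then have "1 / real m \<le> p (r_seq m) / K'"
      using ball_prob_alpha_seq_ge[OF \<delta>(1) \<open>r0 / 2 > 0\<close> r0(2)] \<delta>(2) by auto
    then show ?case
      using K' elim by (simp add: field_simps)
  qed
qed

lemma risk_tendsto_zero_iff_sphere_term:
  "((\<lambda>m. \<integral>\<omega>. \<bar>\<eta> (NN m \<omega>) - \<eta> x\<bar> \<partial>M) \<longlonglongrightarrow> 0)
     \<longleftrightarrow> ((\<lambda>m. \<integral>\<omega>. indicator (sphere x (r_seq m)) (NN m \<omega>) * \<bar>\<eta> (NN m \<omega>) - \<eta> x\<bar> \<partial>M) \<longlonglongrightarrow> 0)"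
  (is "?risk \<longlonglongrightarrow> 0 \<longleftrightarrow> ?sphere \<longlonglongrightarrow> 0")
proof
  have sphere: "sphere x r \<in> sets borel" for r
    unfolding cball_diff_eq_sphere[symmetric] by (auto intro: borel_open borel_closed)
  have "\<forall>\<^sub>F m in sequentially. 0 \<le> ?sphere m"
    by (intro always_eventually allI integral_nonneg_AE) simp
  moreover have "\<forall>\<^sub>F m in sequentially. ?sphere m \<le> ?risk m"
    using eventually_ge_at_top[of 1]
  proof eventually_elim
    case (elim m)
    show ?case
      by (intro integral_mono integrable_indicator_NN_dev[OF elim sphere] integrable_NN_dev[OF elim])
         (auto simp: indicator_def)
  qed
  moreover assume "?risk \<longlonglongrightarrow> 0"
  ultimately show "?sphere \<longlonglongrightarrow> 0"
    by (rule tendsto_sandwich[OF _ _ tendsto_const])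
next
  let ?bound = "\<lambda>m. real m * open_loc_dev M (X 0) \<eta> x (r_seq m) + ?sphere m
                  + C * (1 - p (r_seq m)) ^ m"
  assume sphere_lim: "?sphere \<longlonglongrightarrow> 0"
  have "\<forall>\<^sub>F m in sequentially. 0 \<le> ?risk m"
    by (intro always_eventually allI integral_nonneg_AE) simp
  moreover have "\<forall>\<^sub>F m in sequentially. ?risk m \<le> ?bound m"
    using eventually_ge_at_top[of 1] by eventually_elim (rule risk_NN_le)
  moreover have "(\<lambda>m. (1 - p (r_seq m)) ^ m) \<longlonglongrightarrow> 0"
    using ball_prob_nonneg ball_prob_le_1 filterlim_mult_ball_prob_alpha_seq
    by (rule one_minus_power_tendsto_zero)
  then have "?bound \<longlonglongrightarrow> 0"
    using tendsto_add[OF tendsto_add[OF mult_open_loc_dev_alpha_seq_tendsto_zero sphere_lim]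
        tendsto_mult[OF tendsto_const[of C]]]
    by fastforce
  ultimately show "?risk \<longlonglongrightarrow> 0"
    by (rule tendsto_sandwich[OF _ _ tendsto_const])
qed

end

theorem mainTheorem6:
  fixes M :: "'b measure" and X :: "nat \<Rightarrow> 'b \<Rightarrow> 'a::metric_space"
    and \<eta> :: "'a \<Rightarrow> real" and x :: 'a and \<alpha> :: real
    and NN :: "nat \<Rightarrow> 'b \<Rightarrow> 'a"
  assumes P: "prob_space M"
    and meas: "\<And>i. X i \<in> measurable M borel"
    and indep: "prob_space.indep_vars M (\<lambda>_. borel) X UNIV"
    and ident: "\<And>i. distr M borel (X i) = distr M borel (X 0)"
    and eta_meas: "\<eta> \<in> borel_measurable borel"
    and eta_bdd: "bounded (range \<eta>)"
    and support: "\<And>r. r > 0 \<Longrightarrow> ball_prob M (X 0) x r > 0"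
    and NN_meas: "\<And>m. m \<ge> 1 \<Longrightarrow> NN m \<in> measurable M borel"
    and NN_in: "\<And>m \<omega>. m \<ge> 1 \<Longrightarrow> \<omega> \<in> space M \<Longrightarrow> NN m \<omega> \<in> (\<lambda>i. X i \<omega>) ` {1..m}"
    and NN_min: "\<And>m \<omega> i. m \<ge> 1 \<Longrightarrow> \<omega> \<in> space M \<Longrightarrow> i \<in> {1..m} \<Longrightarrow>
                   dist x (NN m \<omega>) \<le> dist x (X i \<omega>)"
    and no_atom: "measure M {\<omega> \<in> space M. X 0 \<omega> = x} = 0"
    and dev_pos: "\<And>r. r > 0 \<Longrightarrow> loc_dev M (X 0) \<eta> x r > 0"
    and alpha: "0 < \<alpha>" "\<alpha> < 1"
    and leb: "lebesgue_point M (X 0) \<eta> x"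
  shows "((\<lambda>m. \<integral>\<omega>. \<bar>\<eta> (NN m \<omega>) - \<eta> x\<bar> \<partial>M) \<longlonglongrightarrow> 0)
     \<longleftrightarrow> ((\<lambda>m. \<integral>\<omega>. indicator (sphere x (alpha_seq M (X 0) \<eta> x \<alpha> m)) (NN m \<omega>)
                          * \<bar>\<eta> (NN m \<omega>) - \<eta> x\<bar> \<partial>M) \<longlonglongrightarrow> 0)"
proof -
  obtain a where a: "\<And>y. norm (\<eta> y) \<le> a"
    using eta_bdd unfolding bounded_iff by auto
  have dev: "\<bar>\<eta> y - \<eta> x\<bar> \<le> 2 * a" for y
    using a[of y] a[of x] by auto
  interpret prob_space M
    by (rule P)
  interpret nearest_neighbor_lebesgue_point M X \<eta> x NN "2 * a" \<alpha>
    by unfold_locales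
      (fact meas indep ident eta_meas dev NN_meas NN_in NN_min alpha support no_atom dev_pos leb)+
  show ?thesis
    by (rule risk_tendsto_zero_iff_sphere_term)
qed

end
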